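(* Let $N,d\in\mathbb{N}^*$, $\alpha>0$, and for $i\neq j$ let $\Psi_{ij}:\mathbb{R}^{2dN}\to\mathbb{R}_+$ be non-negative, bounded and locally Lipschitz. Let $(x_i(t),v_i(t))_{i\in\{1,\dots,N\},t\ge0}$ be a solution on $\mathbb{R}_+$ of $$\frac{dx_i}{dt}=v_i,\qquad \frac{dv_i}{dt}=\alpha\sum_{j=1}^NQ_t(i,j)(v_j-v_i),$$ where $Q_t(i,j)=\Psi_{ij}((x_1(t),v_1(t)),\dots,(x_N(t),v_N(t)))$ for $i\ne j$ and $Q_t(i,i)=-\sum_{j\ne i}Q_t(i,j)$. Let $(P^*_{s,t})_{0\le s\le t}$ be the solution on $\mathbb{R}_+$ of $$P^*_{t,t}=I,\qquad \partial_tP^*_{s,t}=\alpha Q_tP^*_{s,t},\qquad \partial_sP^*_{s,t}=-\alpha P^*_{s,t}Q_s,$$ and define the Dobrushin ergodicity coefficient $\mu(P^*_{s,t})=\inf_{i,j}\sum_{k=1}^N P^*_{s,t}(i,k)\wedge P^*_{s,t}(j,k)$. Then for all $0\le s\le t$, $$V(t)\le\big(1-\mu(P^*_{s,t})\big)V(s),$$ where $V(t)=\sup_{i,j}\|v_i(t)-v_j(t)\|_2$.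
   Context: $a\wedge b=\min(a,b)$; $\|\cdot\|_2$ is the Euclidean norm; $I$ is the $N\times N$ identity matrix. The matrices $P^*_{s,t}$ are stochastic matrices. *)

theory Defs
  imports "HOL-Analysis.Analysis"
begin

text \<open>Agents are indexed by a finite type 'n (N = CARD('n) \<ge> 1), space is real^'d (d = CARD('d) \<ge> 1).
A configuration ((x_1,v_1),...,(x_N,v_N)) in R^{2dN} is represented as a pair (x, v) of
elements of real^'d^'n.\<close>

definition locally_lipschitz :: "('a::metric_space \<Rightarrow> 'b::metric_space) \<Rightarrow> bool" where
  "locally_lipschitz f \<longleftrightarrow> (\<forall>z. \<exists>e>0. \<exists>L. L-lipschitz_on (ball z e) f)"

definition Qmat :: "('n::finite \<Rightarrow> 'n \<Rightarrow> ((real^'d^'n) \<times> (real^'d^'n)) \<Rightarrow> real)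
    \<Rightarrow> ((real^'d^'n) \<times> (real^'d^'n)) \<Rightarrow> real^'n^'n" where
  "Qmat Psi z = (\<chi> i j. if i = j then - (\<Sum>k\<in>UNIV - {i}. Psi i k z) else Psi i j z)"

definition dobrushin :: "real^'n^'n \<Rightarrow> real" where
  "dobrushin P = (INF i. INF j. \<Sum>k\<in>UNIV. min (P $ i $ k) (P $ j $ k))"

definition vdiam :: "real^'d^'n \<Rightarrow> real" where
  "vdiam v = (SUP i. SUP j. norm (v $ i - v $ j))"

end

theory Submission
  imports Defs
begin

text \<open>
  The backward Kolmogorov equation makes \<open>\<sigma> \<mapsto> P\<^sub>\<sigma>\<^sub>,\<^sub>t B(\<sigma>)\<close> constant on \<open>[s, t]\<close>
  whenever \<open>B' = \<alpha> Q B\<close>. Taking for \<open>B\<close> the velocities gives \<open>v(t) = P\<^sub>s\<^sub>,\<^sub>t v(s)\<close>; taking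
  the all-ones matrix (killed by \<open>Q\<close>, whose rows sum to zero) shows that the rows of
  \<open>P\<^sub>s\<^sub>,\<^sub>t\<close> sum to one. For such a matrix \<open>(P w)\<^sub>i - (P w)\<^sub>j = \<Sum>\<^sub>k a\<^sub>k w\<^sub>k - \<Sum>\<^sub>k b\<^sub>k w\<^sub>k\<close>, where
  \<open>a, b \<ge> 0\<close> are what remains of rows \<open>i, j\<close> after removing their common part
  \<open>min (P\<^sub>i\<^sub>k) (P\<^sub>j\<^sub>k)\<close>; both have total mass \<open>c = 1 - \<Sum>\<^sub>k min (P\<^sub>i\<^sub>k) (P\<^sub>j\<^sub>k)\<close>, and
  \<open>c (\<Sum> a\<^sub>k w\<^sub>k - \<Sum> b\<^sub>l w\<^sub>l) = \<Sum>\<^sub>k\<^sub>,\<^sub>l a\<^sub>k b\<^sub>l (w\<^sub>k - w\<^sub>l)\<close> has norm at most \<open>c\<^sup>2 V\<close>.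
\<close>

lemma norm_diff_le_vdiam: "norm (w $ k - w $ l) \<le> vdiam (w :: real^'d::finite^'n::finite)"
proof -
  have "norm (w $ k - w $ l) \<le> (SUP j. norm (w $ k - w $ j))"
    by (rule cSUP_upper) (auto intro: bdd_above_finite)
  also have "\<dots> \<le> vdiam w"
    unfolding vdiam_def by (rule cSUP_upper) (auto intro: bdd_above_finite)
  finally show ?thesis .
qed

lemma vdiam_nonneg: "0 \<le> vdiam (w :: real^'d::finite^'n::finite)"
  using norm_diff_le_vdiam[of w undefined undefined] by simp

lemma vdiam_le:
  assumes "\<And>i j. norm (w $ i - w $ j) \<le> C"
  shows "vdiam (w :: real^'d::finite^'n::finite) \<le> C"
  unfolding vdiam_def using assms by (intro cSUP_least) auto

lemma dobrushin_le_row_overlap: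
  "dobrushin (P :: real^'n::finite^'n) \<le> (\<Sum>k\<in>UNIV. min (P $ i $ k) (P $ j $ k))"
proof -
  have "dobrushin P \<le> (INF j. \<Sum>k\<in>UNIV. min (P $ i $ k) (P $ j $ k))"
    unfolding dobrushin_def by (rule cINF_lower) (auto intro: bdd_below_finite)
  also have "\<dots> \<le> (\<Sum>k\<in>UNIV. min (P $ i $ k) (P $ j $ k))"
    by (rule cINF_lower) (auto intro: bdd_below_finite)
  finally show ?thesis .
qed

lemma norm_diff_sum_scaleR_le_diameter:
  fixes w :: "'a \<Rightarrow> 'b::real_normed_vector"
  assumes K: "finite K"
    and a_nonneg: "\<And>k. k \<in> K \<Longrightarrow> 0 \<le> a k" and b_nonneg: "\<And>k. k \<in> K \<Longrightarrow> 0 \<le> b k"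
    and mass: "sum b K = sum a K"
    and diam: "\<And>k l. k \<in> K \<Longrightarrow> l \<in> K \<Longrightarrow> norm (w k - w l) \<le> \<delta>"
  shows "norm ((\<Sum>k\<in>K. a k *\<^sub>R w k) - (\<Sum>k\<in>K. b k *\<^sub>R w k)) \<le> sum a K * \<delta>"
proof -
  define c where "c = sum a K"
  define D where "D = (\<Sum>k\<in>K. a k *\<^sub>R w k) - (\<Sum>l\<in>K. b l *\<^sub>R w l)"
  have c_nonneg: "0 \<le> c"
    unfolding c_def using a_nonneg by (simp add: sum_nonneg)
  have "c *\<^sub>R D = (\<Sum>l\<in>K. b l) *\<^sub>R (\<Sum>k\<in>K. a k *\<^sub>R w k) - (\<Sum>k\<in>K. a k) *\<^sub>R (\<Sum>l\<in>K. b l *\<^sub>R w l)"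
    by (simp add: D_def c_def mass scaleR_diff_right)
  also have "\<dots> = (\<Sum>k\<in>K. \<Sum>l\<in>K. (a k * b l) *\<^sub>R w k) - (\<Sum>k\<in>K. \<Sum>l\<in>K. (a k * b l) *\<^sub>R w l)"
  proof -
    have "(\<Sum>l\<in>K. b l) *\<^sub>R (\<Sum>k\<in>K. a k *\<^sub>R w k) = (\<Sum>k\<in>K. \<Sum>l\<in>K. (a k * b l) *\<^sub>R w k)"
      by (simp add: scaleR_sum_right scaleR_sum_left mult.commute sum_distrib_left)
    moreover have "(\<Sum>k\<in>K. a k) *\<^sub>R (\<Sum>l\<in>K. b l *\<^sub>R w l) = (\<Sum>k\<in>K. \<Sum>l\<in>K. (a k * b l) *\<^sub>R w l)"
      by (simp add: scaleR_sum_right scaleR_sum_left sum_distrib_right) (rule sum.swap)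
    ultimately show ?thesis by simp
  qed
  also have "\<dots> = (\<Sum>k\<in>K. \<Sum>l\<in>K. (a k * b l) *\<^sub>R (w k - w l))"
    by (simp add: scaleR_diff_right sum_subtractf)
  finally have cD: "c *\<^sub>R D = \<dots>" .
  have "c * norm D = norm (\<Sum>k\<in>K. \<Sum>l\<in>K. (a k * b l) *\<^sub>R (w k - w l))"
    using c_nonneg by (simp flip: cD)
  also have "\<dots> \<le> (\<Sum>k\<in>K. \<Sum>l\<in>K. norm ((a k * b l) *\<^sub>R (w k - w l)))"
    by (rule order_trans[OF norm_sum sum_mono[OF norm_sum]])
  also have "\<dots> \<le> (\<Sum>k\<in>K. \<Sum>l\<in>K. (a k * b l) * \<delta>)"
    using a_nonneg b_nonneg diam by (intro sum_mono) (simp add: mult_left_mono)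
  also have "\<dots> = sum a K * sum b K * \<delta>"
    by (simp add: sum_distrib_left sum_distrib_right mult.assoc) (rule sum.swap)
  also have "\<dots> = c * (c * \<delta>)"
    by (simp add: c_def mass)
  finally have scaled: "c * norm D \<le> c * (c * \<delta>)" .
  show ?thesis
  proof (cases "c = 0")
    case True
    then have "a k = 0" "b k = 0" if "k \<in> K" for k
      using that K a_nonneg b_nonneg mass unfolding c_def by (simp_all add: sum_nonneg_eq_0_iff)
    then show ?thesis
      by simp
  next
    case False
    with scaled c_nonneg show ?thesis
      by (simp add: D_def c_def)
  qed
qed
lemma norm_diff_rows_matrix_mult_le:
  fixes P :: "real^'n::finite^'n" and w :: "real^'d::finite^'n"
  assumes rows: "\<And>i. (\<Sum>k\<in>UNIV. P $ i $ k) = 1"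
  shows "norm ((P ** w) $ i - (P ** w) $ j) \<le> (1 - (\<Sum>k\<in>UNIV. min (P $ i $ k) (P $ j $ k))) * vdiam w"
proof -
  define m where "m k = min (P $ i $ k) (P $ j $ k)" for k
  define a where "a k = P $ i $ k - m k" for k
  define b where "b k = P $ j $ k - m k" for k
  have mass_a: "sum a UNIV = 1 - sum m UNIV"
    using rows[of i] by (simp add: a_def sum_subtractf)
  have mass_b: "sum b UNIV = 1 - sum m UNIV"
    using rows[of j] by (simp add: b_def sum_subtractf)
  have row: "(P ** w) $ r = (\<Sum>k\<in>UNIV. P $ r $ k *\<^sub>R w $ k)" for r
    by (simp add: vec_eq_iff matrix_matrix_mult_def)
  have "(P ** w) $ i - (P ** w) $ j = (\<Sum>k\<in>UNIV. a k *\<^sub>R w $ k) - (\<Sum>k\<in>UNIV. b k *\<^sub>R w $ k)"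
    by (simp add: row a_def b_def scaleR_diff_left sum_subtractf)
  also have "norm \<dots> \<le> sum a UNIV * vdiam w"
    by (rule norm_diff_sum_scaleR_le_diameter[OF finite_class.finite_UNIV _ _ mass_b[folded mass_a]])
       (auto simp: a_def b_def m_def norm_diff_le_vdiam)
  finally show ?thesis
    by (simp add: mass_a m_def)
qed

lemma vdiam_matrix_mult_le:
  fixes P :: "real^'n::finite^'n" and w :: "real^'d::finite^'n"
  assumes rows: "\<And>i. (\<Sum>k\<in>UNIV. P $ i $ k) = 1"
  shows "vdiam (P ** w) \<le> (1 - dobrushin P) * vdiam w"
proof (rule vdiam_le)
  fix i j
  have "norm ((P ** w) $ i - (P ** w) $ j) \<le> (1 - (\<Sum>k\<in>UNIV. min (P $ i $ k) (P $ j $ k))) * vdiam w"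
    using rows by (rule norm_diff_rows_matrix_mult_le)
  also have "\<dots> \<le> (1 - dobrushin P) * vdiam w"
    by (intro mult_right_mono vdiam_nonneg) (simp add: dobrushin_le_row_overlap)
  finally show "norm ((P ** w) $ i - (P ** w) $ j) \<le> (1 - dobrushin P) * vdiam w" .
qed

lemma bounded_bilinear_matrix_matrix_mult:
  "bounded_bilinear (\<lambda>(A :: real^'n::finite^'m::finite) (B :: real^'k::finite^'n). A ** B)"
proof -
  have "bilinear (\<lambda>(A :: real^'n^'m) (B :: real^'k^'n). A ** B)"
    unfolding bilinear_def
    by (auto intro!: linearI
        simp: vec_eq_iff matrix_matrix_mult_def sum.distrib algebra_simps sum_distrib_left)
  then show ?thesis
    by (simp add: bilinear_conv_bounded_bilinear)
qed

lemma backward_forward_matrix_mult_const: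
  fixes A Q :: "real \<Rightarrow> real^'n::finite^'n" and B :: "real \<Rightarrow> real^'k::finite^'n"
  assumes "s \<le> t"
    and A_deriv: "\<And>\<sigma>. \<sigma> \<in> {s..t} \<Longrightarrow> (A has_vector_derivative - (A \<sigma> ** Q \<sigma>)) (at \<sigma> within {s..t})"
    and B_deriv: "\<And>\<sigma>. \<sigma> \<in> {s..t} \<Longrightarrow> (B has_vector_derivative Q \<sigma> ** B \<sigma>) (at \<sigma> within {s..t})"
  shows "A s ** B s = A t ** B t"
proof -
  note bb = bounded_bilinear_matrix_matrix_mult
  have "((\<lambda>\<sigma>. A \<sigma> ** B \<sigma>) has_vector_derivative 0) (at \<sigma> within {s..t})" if "\<sigma> \<in> {s..t}" for \<sigma>
    using bounded_bilinear.has_vector_derivative[OF bb A_deriv[OF that] B_deriv[OF that]]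
    by (simp add: bounded_bilinear.minus_left[OF bb] matrix_mul_assoc)
  then obtain c where "\<And>\<sigma>. \<sigma> \<in> {s..t} \<Longrightarrow> A \<sigma> ** B \<sigma> = c"
    using has_vector_derivative_zero_constant[OF convex_real_interval(5)] by blast
  with \<open>s \<le> t\<close> show ?thesis
    by simp
qed

lemma Qmat_row_sum: "(\<Sum>j\<in>UNIV. Qmat Psi z $ i $ j) = 0"
proof -
  have "(\<Sum>j\<in>UNIV. Qmat Psi z $ i $ j) = Qmat Psi z $ i $ i + (\<Sum>j\<in>UNIV - {i}. Qmat Psi z $ i $ j)"
    by (simp add: sum.remove)
  also have "(\<Sum>j\<in>UNIV - {i}. Qmat Psi z $ i $ j) = (\<Sum>j\<in>UNIV - {i}. Psi i j z)"
    by (rule sum.cong) (auto simp: Qmat_def)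
  finally show ?thesis
    by (simp add: Qmat_def)
qed

lemma sum_scaleR_diff_eq_matrix_mult:
  fixes Q :: "real^'n::finite^'n" and w :: "real^'d::finite^'n"
  assumes "\<And>i. (\<Sum>j\<in>UNIV. Q $ i $ j) = 0"
  shows "(\<chi> i. \<Sum>j\<in>UNIV. Q $ i $ j *\<^sub>R (w $ j - w $ i)) = Q ** w"
  using assms
  by (simp add: vec_eq_iff matrix_matrix_mult_def scaleR_diff_right sum_subtractf
      scaleR_sum_left[symmetric] sum_component)

theorem corollary2p8:
  fixes Psi :: "'n::finite \<Rightarrow> 'n \<Rightarrow> ((real^'d::finite^'n) \<times> (real^'d^'n)) \<Rightarrow> real"
    and x v :: "real \<Rightarrow> real^'d^'n"
    and P :: "real \<Rightarrow> real \<Rightarrow> real^'n^'n"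
    and \<alpha> :: real
  assumes alpha_pos: "\<alpha> > 0"
    and Psi_nonneg: "\<And>i j z. i \<noteq> j \<Longrightarrow> Psi i j z \<ge> 0"
    and Psi_bounded: "\<And>i j. i \<noteq> j \<Longrightarrow> bounded (range (Psi i j))"
    and Psi_loclip: "\<And>i j. i \<noteq> j \<Longrightarrow> locally_lipschitz (Psi i j)"
    and x_ode: "\<And>t. t \<ge> 0 \<Longrightarrow> (x has_vector_derivative v t) (at t within {0..})"
    and v_ode: "\<And>t. t \<ge> 0 \<Longrightarrow> (v has_vector_derivative
              (\<chi> i. \<alpha> *\<^sub>R (\<Sum>j\<in>UNIV. Qmat Psi (x t, v t) $ i $ j *\<^sub>R (v t $ j - v t $ i))))
              (at t within {0..})"
    and P_diag: "\<And>t. t \<ge> 0 \<Longrightarrow> P t t = mat 1"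
    and P_dt: "\<And>s t. 0 \<le> s \<Longrightarrow> s \<le> t \<Longrightarrow>
              ((\<lambda>\<tau>. P s \<tau>) has_vector_derivative (\<alpha> *\<^sub>R (Qmat Psi (x t, v t) ** P s t)))
              (at t within {s..})"
    and P_ds: "\<And>s t. 0 \<le> s \<Longrightarrow> s \<le> t \<Longrightarrow>
              ((\<lambda>\<sigma>. P \<sigma> t) has_vector_derivative (- (\<alpha> *\<^sub>R (P s t ** Qmat Psi (x s, v s)))))
              (at s within {0..t})"
    and st: "0 \<le> s" "s \<le> t"
  shows "vdiam (v t) \<le> (1 - dobrushin (P s t)) * vdiam (v s)"
proof -
  define Q where "Q \<sigma> = \<alpha> *\<^sub>R Qmat Psi (x \<sigma>, v \<sigma>)" for \<sigma>
  define ones :: "real^'n^'n" where "ones = (\<chi> i j. 1)"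
  have Q_rows: "(\<Sum>j\<in>UNIV. Q \<sigma> $ i $ j) = 0" for \<sigma> i
    by (simp add: Q_def Qmat_row_sum flip: sum_distrib_left)
  have P_deriv: "((\<lambda>\<sigma>. P \<sigma> t) has_vector_derivative - (P \<sigma> t ** Q \<sigma>)) (at \<sigma> within {s..t})"
    if "\<sigma> \<in> {s..t}" for \<sigma>
    using P_ds[of \<sigma> t] that st
    by (auto simp: Q_def matrix_scalar_ac scalar_matrix_assoc intro: has_vector_derivative_within_subset)
  have v_deriv: "(v has_vector_derivative Q \<sigma> ** v \<sigma>) (at \<sigma> within {s..t})" if "\<sigma> \<in> {s..t}" for \<sigma>
  proof -
    have "Q \<sigma> ** v \<sigma> = (\<chi> i. \<Sum>j\<in>UNIV. Q \<sigma> $ i $ j *\<^sub>R (v \<sigma> $ j - v \<sigma> $ i))"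
      by (rule sum_scaleR_diff_eq_matrix_mult[OF Q_rows, symmetric])
    also have "\<dots> = (\<chi> i. \<alpha> *\<^sub>R (\<Sum>j\<in>UNIV. Qmat Psi (x \<sigma>, v \<sigma>) $ i $ j *\<^sub>R (v \<sigma> $ j - v \<sigma> $ i)))"
      by (simp add: Q_def scaleR_sum_right)
    finally show ?thesis
      using v_ode[of \<sigma>] that st by (auto intro: has_vector_derivative_within_subset)
  qed
  have "v t = P s t ** v s"
    using backward_forward_matrix_mult_const[OF st(2) P_deriv v_deriv] P_diag st by simp
  moreover have "(\<Sum>k\<in>UNIV. P s t $ i $ k) = 1" for i
  proof -
    have "Q \<sigma> ** ones = 0" for \<sigma>
      using Q_rows by (simp add: vec_eq_iff matrix_matrix_mult_def ones_def)
    then have "P s t ** ones = ones"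
      using backward_forward_matrix_mult_const[OF st(2) P_deriv, of "\<lambda>_. ones"] P_diag st by simp
    then show ?thesis
      by (simp add: vec_eq_iff matrix_matrix_mult_def ones_def)
  qed
  ultimately show ?thesis
    by (simp add: vdiam_matrix_mult_le)
qed

end
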